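(* For every integer $n\ge 1$ there is a context-free grammar of size $O(\log n)$ whose language is exactly \[ L_n=\{(a+b)^k\,a\,(a+b)^{n-1}\,a\,(a+b)^{n-1-k} \mid 0\le k\le n-1\}\subseteq\{a,b\}^{2n}. \]
   Context: A context-free grammar is $G=(\Sigma,N,R,S)$ with terminals $\Sigma$, non-terminals $N$, rules $A\to W$ ($A\in N$, $W\in(\Sigma\cup N)^*$) and start symbol $S$. Its size is $|G|=\sum_{(A\to W)\in R}|W|$. *)

theory Defs
  imports Complex_Main
begin

datatype ('t, 'n) sym = Tm 't | Nt 'n

record ('t, 'n) cfg =
  rules :: "('n \<times> ('t, 'n) sym list) set"
  start :: 'n

definition cfg_size :: "('t, 'n) cfg \<Rightarrow> nat" where
  "cfg_size G = (\<Sum>(A, W) \<in> rules G. length W)"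

definition derive1 :: "('t, 'n) cfg \<Rightarrow> ('t, 'n) sym list \<Rightarrow> ('t, 'n) sym list \<Rightarrow> bool" where
  "derive1 G x y \<longleftrightarrow> (\<exists>u v A W. (A, W) \<in> rules G \<and> x = u @ [Nt A] @ v \<and> y = u @ W @ v)"

definition lang :: "('t, 'n) cfg \<Rightarrow> 't list set" where
  "lang G = {w. (derive1 G)\<^sup>*\<^sup>* [Nt (start G)] (map Tm w)}"

datatype ab = a | b

definition L :: "nat \<Rightarrow> ab list set" where
  "L n = {u @ [a] @ v @ [a] @ x | u v x k.
            k \<le> n - 1 \<and> length u = k \<and> length v = n - 1 \<and> length x = n - 1 - k}"

end

theory Submission
  imports Defs
begin

text \<open>Write \<open>n = 2^T + e\<close> with \<open>e < 2^T\<close>. By doubling, non-terminal \<open>3t\<close> generates all words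
  of length \<open>2^t\<close>. A word of \<open>L n\<close> is a core \<open>a v a\<close> with \<open>|v| = n - 1\<close>, padded by \<open>n - 1\<close>
  letters split arbitrarily between left and right. Non-terminal \<open>3t+2\<close> generates the core padded
  by \<open>2^t - 1 + (e mod 2^t)\<close> letters: passing from level \<open>t\<close> to \<open>t+1\<close> adds one block of
  \<open>2^t\<close> letters, or two if bit \<open>t\<close> of \<open>e\<close> is set, each on either side. Since a block is never
  longer than the current padding plus one, every split of the padding is reached, and at level
  \<open>T\<close> the padding is \<open>n - 1\<close>. The same construction over the empty core (non-terminal \<open>3t+1\<close>)
  produces the middle part \<open>v\<close>. Each level costs a bounded number of symbols, so the grammar
  has size \<open>O(T) = O(log n)\<close>.\<close>

abbreviation derives :: "('t, 'n) cfg \<Rightarrow> ('t, 'n) sym list \<Rightarrow> ('t, 'n) sym list \<Rightarrow> bool" where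
  "derives G \<equiv> (derive1 G)\<^sup>*\<^sup>*"

definition derivable :: "('t, 'n) cfg \<Rightarrow> 'n \<Rightarrow> 't list set" where
  "derivable G A = {w. derives G [Nt A] (map Tm w)}"

lemma lang_eq_derivable_start: "lang G = derivable G (start G)"
  by (simp add: lang_def derivable_def)

lemma derive1_append_context: "derive1 G x y \<Longrightarrow> derive1 G (p @ x @ q) (p @ y @ q)"
  unfolding derive1_def by (metis append.assoc)

lemma derives_append_context: "derives G x y \<Longrightarrow> derives G (p @ x @ q) (p @ y @ q)"
  by (induction rule: rtranclp_induct) (auto intro: rtranclp.rtrancl_into_rtrancl derive1_append_context)

lemma derives_append:
  assumes "derives G x (map Tm u)" and "derives G y (map Tm v)"
  shows "derives G (x @ y) (map Tm (u @ v))"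
proof -
  have "derives G ([] @ x @ y) ([] @ map Tm u @ y)"
    using derives_append_context[OF assms(1)] .
  moreover have "derives G (map Tm u @ y @ []) (map Tm u @ map Tm v @ [])"
    using derives_append_context[OF assms(2)] .
  ultimately show ?thesis by simp
qed

lemma derivable_rule:
  assumes "(A, W) \<in> rules G" and "derives G W (map Tm w)"
  shows "w \<in> derivable G A"
proof -
  have "derive1 G [Nt A] W"
    unfolding derive1_def using assms(1) by (metis append.left_neutral append.right_neutral)
  then show ?thesis
    using assms(2) unfolding derivable_def by (simp add: converse_rtranclp_into_rtranclp)
qed

definition conc :: "'a list set \<Rightarrow> 'a list set \<Rightarrow> 'a list set" where
  "conc X Y = {u @ v | u v. u \<in> X \<and> v \<in> Y}"

lemma concI: "u \<in> X \<Longrightarrow> v \<in> Y \<Longrightarrow> u @ v \<in> conc X Y"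
  unfolding conc_def by blast

lemma conc_assoc: "conc (conc X Y) Z = conc X (conc Y Z)"
  unfolding conc_def by (auto, metis append.assoc, metis append.assoc)

lemma conc_Nil_right [simp]: "conc X {[]} = X"
  unfolding conc_def by auto

lemma conc_Un_left [simp]: "conc (X \<union> Y) Z = conc X Z \<union> conc Y Z"
  unfolding conc_def by auto

lemma conc_Un_right [simp]: "conc X (Y \<union> Z) = conc X Y \<union> conc X Z"
  unfolding conc_def by auto

lemma conc_mono: "X \<subseteq> X' \<Longrightarrow> Y \<subseteq> Y' \<Longrightarrow> conc X Y \<subseteq> conc X' Y'"
  unfolding conc_def by blast

fun rhs_lang :: "('n \<Rightarrow> 't list set) \<Rightarrow> ('t, 'n) sym list \<Rightarrow> 't list set" where
  "rhs_lang S [] = {[]}"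
| "rhs_lang S (Tm c # W) = conc {[c]} (rhs_lang S W)"
| "rhs_lang S (Nt A # W) = conc (S A) (rhs_lang S W)"

lemma rhs_lang_append: "rhs_lang S (V @ W) = conc (rhs_lang S V) (rhs_lang S W)"
proof (induction V)
  case (Cons x V)
  then show ?case by (cases x) (simp_all add: conc_assoc)
qed (simp add: conc_def)

lemma rhs_lang_map_Tm: "rhs_lang S (map Tm w) = {w}"
  by (induction w) (auto simp: conc_def)

lemma rhs_lang_derive1_subset:
  assumes closed: "\<forall>(A, W) \<in> rules G. rhs_lang S W \<subseteq> S A" and "derive1 G x y"
  shows "rhs_lang S y \<subseteq> rhs_lang S x"
proof -
  obtain u v A W where "(A, W) \<in> rules G" and x: "x = u @ [Nt A] @ v" and y: "y = u @ W @ v"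
    using \<open>derive1 G x y\<close> unfolding derive1_def by blast
  then have "rhs_lang S W \<subseteq> S A" using closed by blast
  then show ?thesis
    unfolding x y rhs_lang_append by (simp add: conc_mono)
qed

lemma derivable_subset_closed:
  assumes closed: "\<forall>(A, W) \<in> rules G. rhs_lang S W \<subseteq> S A"
  shows "derivable G A \<subseteq> S A"
proof
  fix w assume "w \<in> derivable G A"
  then have "derives G [Nt A] (map Tm w)" unfolding derivable_def by simp
  then have "rhs_lang S (map Tm w) \<subseteq> rhs_lang S [Nt A]"
    by (induction rule: rtranclp_induct) (use rhs_lang_derive1_subset[OF closed] in blast)+
  then show "w \<in> S A" by (simp add: rhs_lang_map_Tm)
qed

lemma derives_rhs_lang:
  assumes "\<forall>B. Nt B \<in> set W \<longrightarrow> S B \<subseteq> derivable G B" and "w \<in> rhs_lang S W"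
  shows "derives G W (map Tm w)"
  using assms
proof (induction W arbitrary: w)
  case (Cons x W)
  then obtain u v where w: "w = u @ v" and u: "u \<in> (case x of Tm c \<Rightarrow> {[c]} | Nt A \<Rightarrow> S A)"
    and v: "derives G W (map Tm v)"
    by (cases x) (auto simp: conc_def)
  have "derives G [x] (map Tm u)"
    using u Cons.prems(1) by (cases x) (auto simp: derivable_def)
  then show ?case
    using derives_append[OF _ v] w by fastforce
qed simp

lemma rhs_lang_subset_derivable:
  assumes "(A, W) \<in> rules G" and "\<forall>B. Nt B \<in> set W \<longrightarrow> S B \<subseteq> derivable G B"
  shows "rhs_lang S W \<subseteq> derivable G A"
  using derivable_rule[OF assms(1)] derives_rhs_lang[OF assms(2)] by blast

definition words :: "nat \<Rightarrow> 'a list set" where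
  "words m = {w. length w = m}"

lemma words_add: "words (m + k) = conc (words m) (words k)"
proof (rule equalityI)
  show "words (m + k) \<subseteq> conc (words m) (words k)"
  proof
    fix w assume "w \<in> words (m + k)"
    then have "w = take m w @ drop m w" and "length (take m w) = m" and "length (drop m w) = k"
      unfolding words_def by auto
    then show "w \<in> conc (words m) (words k)" unfolding conc_def words_def by blast
  qed
qed (auto simp: conc_def words_def)

lemma words_Suc_0: "words (Suc 0) = {[a], [b]}"
  unfolding words_def by (auto simp: length_Suc_conv intro: ab.exhaust)

definition padded :: "nat \<Rightarrow> 'a list set \<Rightarrow> 'a list set" where
  "padded c X = {p @ x @ q | p x q. x \<in> X \<and> length p + length q = c}"

lemma paddedI: "x \<in> X \<Longrightarrow> length p + length q = c \<Longrightarrow> p @ x @ q \<in> padded c X"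
  unfolding padded_def by blast

lemma padded_0 [simp]: "padded 0 X = X"
  unfolding padded_def by force

lemma padded_Nil: "padded c {[]} = words c"
  unfolding padded_def words_def by (auto intro: exI[of _ "[]"])

text \<open>Splitting \<open>c + s\<close> padding letters into \<open>p\<close> and \<open>q\<close>, one of them has at least \<open>s\<close>
  letters because \<open>s \<le> c + 1\<close>; those \<open>s\<close> letters are the added block.\<close>

lemma padded_add:
  assumes "s \<le> c + 1"
  shows "padded (c + s) X = conc (words s) (padded c X) \<union> conc (padded c X) (words s)"
proof
  show "conc (words s) (padded c X) \<union> conc (padded c X) (words s) \<subseteq> padded (c + s) X"
    unfolding conc_def padded_def words_def
    by (auto, metis append.assoc length_append add.commute, force)
next
  show "padded (c + s) X \<subseteq> conc (words s) (padded c X) \<union> conc (padded c X) (words s)"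
  proof
    fix w assume "w \<in> padded (c + s) X"
    then obtain p x q where w: "w = p @ x @ q" and "x \<in> X" and len: "length p + length q = c + s"
      unfolding padded_def by blast
    show "w \<in> conc (words s) (padded c X) \<union> conc (padded c X) (words s)"
    proof (cases "s \<le> length p")
      case True
      have "take s p \<in> words s" using True by (simp add: words_def)
      moreover have "drop s p @ x @ q \<in> padded c X"
        using \<open>x \<in> X\<close> len True by (intro paddedI) auto
      ultimately have "take s p @ (drop s p @ x @ q) \<in> conc (words s) (padded c X)"
        by (rule concI)
      moreover have "w = take s p @ (drop s p @ x @ q)" using w by simp
      ultimately show ?thesis by simp
    next
      case False
      define m where "m = length q - s"
      have "p @ x @ take m q \<in> padded c X"
        using \<open>x \<in> X\<close> len False assms unfolding m_def by (intro paddedI) auto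
      moreover have "drop m q \<in> words s" using False len assms by (simp add: words_def m_def)
      ultimately have "(p @ x @ take m q) @ drop m q \<in> conc (padded c X) (words s)"
        by (rule concI)
      moreover have "w = (p @ x @ take m q) @ drop m q" using w by simp
      ultimately show ?thesis by simp
    qed
  qed
qed

definition split_rhs :: "bool \<Rightarrow> 'a \<Rightarrow> 'a \<Rightarrow> 'a list list" where
  "split_rhs double X P =
     (if double then [[X, X, P], [X, P, X], [P, X, X]] else [[X, P], [P, X]])"

lemma rhs_lang_split_rhs:
  assumes "S X = words s" and "S P = padded c B" and "s \<le> c + 1"
  shows "(\<Union>W \<in> set (split_rhs double (Nt X) (Nt P)). rhs_lang S W)
           = padded (c + (if double then 2 * s else s)) B"
proof -
  have single: "padded (c + s) B = conc (words s) (padded c B) \<union> conc (padded c B) (words s)"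
    using padded_add[OF assms(3)] .
  have "padded (c + s + s) B = conc (words s) (padded (c + s) B) \<union> conc (padded (c + s) B) (words s)"
    using padded_add[of s "c + s"] assms(3) by simp
  then have "padded (c + 2 * s) B = conc (words s) (conc (words s) (padded c B))
      \<union> conc (words s) (conc (padded c B) (words s)) \<union> conc (padded c B) (conc (words s) (words s))"
    unfolding single by (auto simp: conc_assoc mult_2 add.assoc)
  then show ?thesis
    using assms single unfolding split_rhs_def by auto
qed

definition pad_len :: "nat \<Rightarrow> nat \<Rightarrow> nat" where
  "pad_len e t = 2 ^ t - 1 + take_bit t e"

lemma pad_len_0 [simp]: "pad_len e 0 = 0"
  by (simp add: pad_len_def)

lemma pad_len_Suc: "pad_len e (Suc t) = pad_len e t + (if bit e t then 2 * 2 ^ t else 2 ^ t)"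
proof -
  have "(1::nat) \<le> 2 ^ t" by simp
  then show ?thesis
    unfolding pad_len_def take_bit_Suc_from_most by auto
qed

lemma two_power_le_pad_len: "2 ^ t \<le> pad_len e t + 1"
  by (simp add: pad_len_def)

lemma pad_len_top:
  assumes "2 ^ T \<le> n" and "n < 2 ^ Suc T"
  shows "pad_len (n - 2 ^ T) T = n - 1"
proof -
  have "take_bit T (n - 2 ^ T) = n - 2 ^ T"
    using assms by (simp add: take_bit_nat_eq_self)
  moreover have "(1::nat) \<le> 2 ^ T" by simp
  ultimately show ?thesis
    using assms(1) unfolding pad_len_def by linarith
qed

definition core :: "nat \<Rightarrow> ab list set" where
  "core n = conc {[a]} (conc (words (n - 1)) {[a]})"

lemma L_eq_padded_core: "L n = padded (n - 1) (core n)"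
proof (rule equalityI)
  show "L n \<subseteq> padded (n - 1) (core n)"
  proof
    fix w assume "w \<in> L n"
    then obtain u v x where w: "w = u @ ([a] @ v @ [a]) @ x" and "length v = n - 1"
      and "length u + length x = n - 1"
      unfolding L_def by auto
    then have "[a] @ v @ [a] \<in> core n"
      unfolding core_def by (intro concI) (auto simp: words_def)
    then show "w \<in> padded (n - 1) (core n)"
      using w \<open>length u + length x = n - 1\<close> by (simp only: paddedI)
  qed
next
  show "padded (n - 1) (core n) \<subseteq> L n"
  proof
    fix w assume "w \<in> padded (n - 1) (core n)"
    then obtain p v q where "w = p @ [a] @ v @ [a] @ q" and "length v = n - 1"
      and "length p + length q = n - 1"
      unfolding padded_def core_def conc_def words_def by auto
    then show "w \<in> L n"
      unfolding L_def by (intro CollectI exI[of _ p] exI[of _ v] exI[of _ q]) auto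
  qed
qed

text \<open>Non-terminal \<open>0\<close> is a letter, \<open>1\<close> the empty word and \<open>2\<close> the core \<open>a (3T+1) a\<close>;
  level \<open>t\<close> defines \<open>3(t+1)\<close>, \<open>3(t+1)+1\<close> and \<open>3(t+1)+2\<close> from \<open>3t\<close>, \<open>3t+1\<close>, \<open>3t+2\<close>
  (see \<open>intended\<close> below for their languages).\<close>

definition level_rules :: "nat \<Rightarrow> nat \<Rightarrow> (nat \<times> (ab, nat) sym list) list" where
  "level_rules e t = (3 * Suc t, [Nt (3 * t), Nt (3 * t)]) #
     [(3 * Suc t + k, W). k \<leftarrow> [1, 2], W \<leftarrow> split_rhs (bit e t) (Nt (3 * t)) (Nt (3 * t + k))]"

definition grammar :: "nat \<Rightarrow> nat \<Rightarrow> (ab, nat) cfg" where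
  "grammar n T = \<lparr>rules = set ([(0, [Tm a]), (0, [Tm b]), (1, []), (2, [Tm a, Nt (3 * T + 1), Tm a])]
       @ concat (map (level_rules (n - 2 ^ T)) [0..<T])), start = 3 * T + 2\<rparr>"

lemma rules_grammar:
  "(A, W) \<in> rules (grammar n T) \<longleftrightarrow>
     (A, W) \<in> {(0, [Tm a]), (0, [Tm b]), (1, []), (2, [Tm a, Nt (3 * T + 1), Tm a])}
     \<or> (\<exists>t < T. A = 3 * Suc t \<and> W = [Nt (3 * t), Nt (3 * t)])
     \<or> (\<exists>t < T. \<exists>k \<in> {1, 2}. A = 3 * Suc t + k \<and>
          W \<in> set (split_rhs (bit (n - 2 ^ T) t) (Nt (3 * t)) (Nt (3 * t + k))))"
  unfolding grammar_def level_rules_def by auto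

lemma sum_set_le_sum_list: "(\<Sum>x \<in> set xs. f x) \<le> sum_list (map f xs :: nat list)"
  by (induction xs) (auto simp: sum.insert_if)

lemma cfg_size_grammar: "cfg_size (grammar n T) \<le> 5 + 20 * T"
proof -
  let ?len = "\<lambda>(A :: nat, W :: (ab, nat) sym list). length W"
  have level: "sum_list (map ?len (level_rules e t)) \<le> 20" for e t
    unfolding level_rules_def split_rhs_def by simp
  have levels: "sum_list (map ?len (concat (map (level_rules e) [0..<T]))) \<le> 20 * T" for e
  proof (induction T)
    case (Suc T)
    then show ?case using level[of e T] by simp
  qed simp
  have "cfg_size (grammar n T) \<le> sum_list (map ?len ([(0, [Tm a]), (0, [Tm b]), (1, []),
      (2, [Tm a, Nt (3 * T + 1), Tm a])] @ concat (map (level_rules (n - 2 ^ T)) [0..<T])))"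
    unfolding cfg_size_def grammar_def cfg.select_convs by (rule sum_set_le_sum_list)
  also have "\<dots> \<le> 5 + 20 * T"
    using levels[of "n - 2 ^ T"] by simp
  finally show ?thesis .
qed

definition intended :: "nat \<Rightarrow> nat \<Rightarrow> nat \<Rightarrow> ab list set" where
  "intended n e m = (if m mod 3 = 0 then words (2 ^ (m div 3))
     else padded (pad_len e (m div 3)) (if m mod 3 = 1 then {[]} else core n))"

lemma intended_block: "intended n e (3 * t) = words (2 ^ t)"
  by (simp add: intended_def)

lemma intended_padded:
  assumes "k \<in> {1, 2}"
  shows "intended n e (3 * t + k) = padded (pad_len e t) (intended n e k)"
  using assms by (auto simp: intended_def)

lemma intended_Suc_0: "intended n e (Suc 0) = {[]}"
  by (simp add: intended_def)

lemma intended_padding: "intended n e (3 * t + 1) = words (pad_len e t)"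
  using intended_padded[of 1 n e t] by (simp add: intended_Suc_0 padded_Nil)

lemma intended_2: "intended n e 2 = core n"
  by (simp add: intended_def)

lemma intended_level_block:
  "intended n e (3 * Suc t) = rhs_lang (intended n e) [Nt (3 * t), Nt (3 * t)]"
  using intended_block[of n e "Suc t"] words_add[of "2 ^ t" "2 ^ t"]
  by (simp add: intended_block mult_2)

lemma intended_level_padded:
  assumes "k \<in> {1, 2}"
  shows "intended n e (3 * Suc t + k) =
    (\<Union>W \<in> set (split_rhs (bit e t) (Nt (3 * t)) (Nt (3 * t + k))). rhs_lang (intended n e) W)"
  using rhs_lang_split_rhs[of "intended n e", OF intended_block intended_padded[OF assms]
      two_power_le_pad_len]
  using intended_padded[OF assms, of n e "Suc t"] by (simp add: pad_len_Suc)

lemma grammar_closed: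
  assumes "pad_len (n - 2 ^ T) T = n - 1" and "(A, W) \<in> rules (grammar n T)"
  shows "rhs_lang (intended n (n - 2 ^ T)) W \<subseteq> intended n (n - 2 ^ T) A"
proof -
  let ?S = "intended n (n - 2 ^ T)"
  have core: "rhs_lang ?S [Tm a, Nt (3 * T + 1), Tm a] = ?S 2"
    using intended_padding[of n "n - 2 ^ T" T] assms(1) by (simp add: intended_2 core_def)
  from assms(2) consider
      (base) "(A, W) \<in> {(0, [Tm a]), (0, [Tm b]), (1, []), (2, [Tm a, Nt (3 * T + 1), Tm a])}"
    | (block) t where "A = 3 * Suc t" "W = [Nt (3 * t), Nt (3 * t)]"
    | (split) t k where "k \<in> {1, 2}" "A = 3 * Suc t + k"
        "W \<in> set (split_rhs (bit (n - 2 ^ T) t) (Nt (3 * t)) (Nt (3 * t + k)))"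
    unfolding rules_grammar by blast
  then show ?thesis
  proof cases
    case base
    then show ?thesis
      using core intended_block[of n _ 0] by (auto simp: words_Suc_0 intended_Suc_0)
  next
    case (block t)
    then show ?thesis by (simp only: intended_level_block)
  next
    case (split t k)
    then show ?thesis by (auto simp only: intended_level_padded)
  qed
qed

lemma split_rhs_Nt:
  "W \<in> set (split_rhs double (Nt X) (Nt P)) \<Longrightarrow> Nt B \<in> set W \<Longrightarrow> B = X \<or> B = P"
  unfolding split_rhs_def by (auto split: if_splits)

lemma blocks_derivable:
  "t \<le> T \<Longrightarrow> intended n e (3 * t) \<subseteq> derivable (grammar n T) (3 * t)"
proof (induction t)
  case 0
  have "rhs_lang (intended n e) [Tm c] \<subseteq> derivable (grammar n T) 0" for c
    by (rule rhs_lang_subset_derivable) (cases c; simp add: rules_grammar)+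
  then show ?case
    using intended_block[of n e 0] by (auto simp: words_Suc_0)
next
  case (Suc t)
  have "(3 * Suc t, [Nt (3 * t), Nt (3 * t)]) \<in> rules (grammar n T)"
    using Suc.prems by (auto simp: rules_grammar)
  then show ?case
    unfolding intended_level_block using Suc
    by (intro rhs_lang_subset_derivable) auto
qed

lemma padded_levels_derivable:
  assumes "e = n - 2 ^ T" and "k \<in> {1, 2}"
    and base: "intended n e k \<subseteq> derivable (grammar n T) k"
  shows "t \<le> T \<Longrightarrow> intended n e (3 * t + k) \<subseteq> derivable (grammar n T) (3 * t + k)"
proof (induction t)
  case (Suc t)
  have "rhs_lang (intended n e) W \<subseteq> derivable (grammar n T) (3 * Suc t + k)"
    if W: "W \<in> set (split_rhs (bit e t) (Nt (3 * t)) (Nt (3 * t + k)))" for W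
  proof (rule rhs_lang_subset_derivable)
    show "(3 * Suc t + k, W) \<in> rules (grammar n T)"
      using W Suc.prems assms(2) unfolding rules_grammar assms(1)[symmetric] by auto
    show "\<forall>B. Nt B \<in> set W \<longrightarrow> intended n e B \<subseteq> derivable (grammar n T) B"
      using split_rhs_Nt[OF W] Suc blocks_derivable[of t T n e] by fastforce
  qed
  then show ?case
    unfolding intended_level_padded[OF assms(2)] by blast
qed (simp add: base)

theorem lang_grammar:
  assumes "2 ^ T \<le> n" and "n < 2 ^ Suc T"
  shows "lang (grammar n T) = L n"
proof -
  define e where "e = n - 2 ^ T"
  let ?G = "grammar n T" and ?S = "intended n e"
  have top: "pad_len e T = n - 1"
    unfolding e_def using pad_len_top[OF assms] .
  have start: "?S (start ?G) = L n"
    using intended_padded[of 2 n e T] top by (simp add: grammar_def intended_2 L_eq_padded_core)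
  have "lang ?G \<subseteq> L n"
    unfolding lang_eq_derivable_start start[symmetric] e_def
    by (rule derivable_subset_closed) (use grammar_closed[OF top[unfolded e_def]] in blast)
  moreover have "L n \<subseteq> lang ?G"
  proof -
    have "?S 1 \<subseteq> derivable ?G 1"
      using rhs_lang_subset_derivable[of 1 "[]" ?G ?S]
      by (simp add: intended_Suc_0 rules_grammar)
    then have "?S (3 * T + 1) \<subseteq> derivable ?G (3 * T + 1)"
      using padded_levels_derivable[OF e_def] by blast
    then have "rhs_lang ?S [Tm a, Nt (3 * T + 1), Tm a] \<subseteq> derivable ?G 2"
      by (intro rhs_lang_subset_derivable) (auto simp: rules_grammar)
    then have "?S 2 \<subseteq> derivable ?G 2"
      using intended_padding[of n e T] top by (simp add: intended_2 core_def)
    then have "?S (3 * T + 2) \<subseteq> derivable ?G (3 * T + 2)"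
      using padded_levels_derivable[OF e_def] by blast
    then show ?thesis
      using start by (simp add: lang_eq_derivable_start grammar_def)
  qed
  ultimately show ?thesis by blast
qed

theorem mainTheorem2:
  shows "\<exists>C::real. \<forall>n::nat. n \<ge> 1 \<longrightarrow>
           (\<exists>G :: (ab, nat) cfg. finite (rules G) \<and> lang G = L n \<and>
              real (cfg_size G) \<le> C * (1 + log 2 (real n)))"
proof (intro exI[of _ 25] allI impI)
  fix n :: nat assume "n \<ge> 1"
  then obtain T where T: "2 ^ T \<le> n" "n < 2 ^ Suc T"
    using ex_power_ivl1[of 2 n] by auto
  have "real T = log 2 (real (2 ^ T))"
    by (simp add: log_nat_power)
  also have "\<dots> \<le> log 2 (real n)"
    using T(1) \<open>n \<ge> 1\<close> by (subst log_le_cancel_iff) auto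
  finally have "real T \<le> log 2 (real n)" .
  moreover have "real (cfg_size (grammar n T)) \<le> 5 + 20 * real T"
    using cfg_size_grammar[of n T] by linarith
  ultimately have "real (cfg_size (grammar n T)) \<le> 25 * (1 + log 2 (real n))"
    by (smt (verit) of_nat_0_le_iff)
  moreover have "finite (rules (grammar n T))"
    by (simp add: grammar_def)
  ultimately show "\<exists>G :: (ab, nat) cfg. finite (rules G) \<and> lang G = L n \<and>
      real (cfg_size G) \<le> 25 * (1 + log 2 (real n))"
    using lang_grammar[OF T] by blast
qed

end
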